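(* Let $0\le s\le t$. The linear functional $X_s:W^{1,2}([0,t])\to\mathbb R$, $X_sh=\int_0^s h(u)\,\mathrm{d}Z_u$, is continuous (for every realization of $Z$), and $$\|X_s\|\le |Z_s|(1+s)+|Z_0|+\Big(\int_0^s Z_{u-}^2\,\mathrm{d}u\Big)^{1/2}<\infty.$$
   Context: $(Z_s)_{0\le s\le t}$ is a real-valued càdlàg semimartingale, $t>0$. For $h\in W^{1,2}([0,t])$ (weakly differentiable functions on $[0,t]$ with $h'\in L_2([0,t])$) the stochastic integral is defined pathwise by $\int_0^s h(u)\,\mathrm{d}Z_u:=h(s)Z_s-h(0)Z_0-\int_0^s Z_{u-}h'(u)\,\mathrm{d}u$. $W^{1,2}([0,t])$ carries the norm $\|h\|^2=|h(0)|^2+\int_0^t h'(u)^2\,\mathrm{d}u$ (a reproducing kernel Hilbert space norm with kernel $R(s,r)=1+\min(s,r)$), and $\|X_s\|$ denotes the corresponding dual norm. *)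

theory Defs
  imports "HOL-Analysis.Analysis"
begin

definition cadlag_on :: "real \<Rightarrow> (real \<Rightarrow> real) \<Rightarrow> bool" where
  "cadlag_on t Z \<longleftrightarrow>
     (\<forall>u\<in>{0..<t}. continuous (at_right u) Z) \<and>
     (\<forall>u\<in>{0<..t}. \<exists>l. (Z \<longlongrightarrow> l) (at_left u))"

definition left_lim :: "(real \<Rightarrow> real) \<Rightarrow> real \<Rightarrow> real" where
  "left_lim Z u = Lim (at_left u) Z"

definition is_wderiv :: "real \<Rightarrow> (real \<Rightarrow> real) \<Rightarrow> (real \<Rightarrow> real) \<Rightarrow> bool" where
  "is_wderiv t h g \<longleftrightarrow>
     g \<in> borel_measurable lborel \<and>
     set_integrable lborel {0..t} (\<lambda>u. (g u)\<^sup>2) \<and>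
     (\<forall>x\<in>{0..t}. h x = h 0 + (LINT u:{0..x}|lborel. g u))"

definition W12 :: "real \<Rightarrow> (real \<Rightarrow> real) set" where
  "W12 t = {h. \<exists>g. is_wderiv t h g}"

definition wderiv :: "real \<Rightarrow> (real \<Rightarrow> real) \<Rightarrow> real \<Rightarrow> real" where
  "wderiv t h = (SOME g. is_wderiv t h g)"

definition w12_norm :: "real \<Rightarrow> (real \<Rightarrow> real) \<Rightarrow> real" where
  "w12_norm t h = sqrt ((h 0)\<^sup>2 + (LINT u:{0..t}|lborel. (wderiv t h u)\<^sup>2))"

text \<open>Pathwise stochastic integral X_s h = int_0^s h(u) dZ_u.\<close>
definition Xint :: "real \<Rightarrow> (real \<Rightarrow> real) \<Rightarrow> real \<Rightarrow> (real \<Rightarrow> real) \<Rightarrow> real" where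
  "Xint t Z s h = h s * Z s - h 0 * Z 0 - (LINT u:{0..s}|lborel. left_lim Z u * wderiv t h u)"

definition dual_norm :: "real \<Rightarrow> ((real \<Rightarrow> real) \<Rightarrow> real) \<Rightarrow> real" where
  "dual_norm t L = Sup {\<bar>L h\<bar> | h. h \<in> W12 t \<and> w12_norm t h \<le> 1}"

end

theory Submission
  imports Defs
begin

text \<open>A cadlag path is bounded
  on [0,t], so u \<mapsto> Z_{u-} is square integrable on [0,s], and Cauchy-Schwarz bounds the integral
  term by (\<integral>_0^s Z_{u-}^2 du)^(1/2) \<parallel>h\<parallel>. The boundary terms are controlled by point evaluation:
  |h(0)| \<le> \<parallel>h\<parallel> and |h(s)| \<le> (1 + s)^(1/2) \<parallel>h\<parallel> \<le> (1 + s) \<parallel>h\<parallel>. As X_s is linear, the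
  resulting bound also gives its continuity; linearity needs the uniqueness of weak derivatives
  almost everywhere, i.e. that an integrable function with vanishing integrals over all
  half-lines vanishes almost everywhere (a Dynkin argument).\<close>

lemma Cauchy_Schwarz_integral:
  fixes f g :: "'a \<Rightarrow> real"
  assumes [measurable]: "f \<in> borel_measurable M" "g \<in> borel_measurable M"
    and f2: "integrable M (\<lambda>x. (f x)\<^sup>2)" and g2: "integrable M (\<lambda>x. (g x)\<^sup>2)"
  shows "integrable M (\<lambda>x. f x * g x)"
    and "\<bar>LINT x|M. f x * g x\<bar> \<le> sqrt (LINT x|M. (f x)\<^sup>2) * sqrt (LINT x|M. (g x)\<^sup>2)"
proof -
  show fg: "integrable M (\<lambda>x. f x * g x)"
  proof (rule Bochner_Integration.integrable_bound[OF Bochner_Integration.integrable_add[OF f2 g2]])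
    show "AE x in M. norm (f x * g x) \<le> norm ((f x)\<^sup>2 + (g x)\<^sup>2)"
    proof (intro AE_I2)
      fix x
      have "\<bar>f x * g x\<bar> \<le> 2 * \<bar>f x\<bar> * \<bar>g x\<bar>" by (simp add: abs_mult)
      also have "\<dots> \<le> (f x)\<^sup>2 + (g x)\<^sup>2"
        using sum_squares_bound[of "\<bar>f x\<bar>" "\<bar>g x\<bar>"] by simp
      finally show "norm (f x * g x) \<le> norm ((f x)\<^sup>2 + (g x)\<^sup>2)" by simp
    qed
  qed simp
  have "(\<integral>\<^sup>+x. ennreal \<bar>f x\<bar> * ennreal \<bar>g x\<bar> \<partial>M) = (\<integral>\<^sup>+x. ennreal \<bar>f x * g x\<bar> \<partial>M)"
    by (simp add: abs_mult ennreal_mult)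
  also have "\<dots> = ennreal (LINT x|M. \<bar>f x * g x\<bar>)"
    using fg by (intro nn_integral_eq_integral) auto
  finally have "ennreal ((LINT x|M. \<bar>f x * g x\<bar>)\<^sup>2) = (\<integral>\<^sup>+x. ennreal \<bar>f x\<bar> * ennreal \<bar>g x\<bar> \<partial>M)\<^sup>2"
    by (simp add: ennreal_power)
  also have "\<dots> \<le> (\<integral>\<^sup>+x. (ennreal \<bar>f x\<bar>)\<^sup>2 \<partial>M) * (\<integral>\<^sup>+x. (ennreal \<bar>g x\<bar>)\<^sup>2 \<partial>M)"
    by (rule Cauchy_Schwarz_nn_integral) simp_all
  also have "\<dots> = ennreal ((LINT x|M. (f x)\<^sup>2) * (LINT x|M. (g x)\<^sup>2))"
    using f2 g2 by (simp add: nn_integral_eq_integral ennreal_power ennreal_mult)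
  finally have "(LINT x|M. \<bar>f x * g x\<bar>)\<^sup>2 \<le> (LINT x|M. (f x)\<^sup>2) * (LINT x|M. (g x)\<^sup>2)"
    by (subst (asm) ennreal_le_iff) simp_all
  then have "(LINT x|M. \<bar>f x * g x\<bar>) \<le> sqrt (LINT x|M. (f x)\<^sup>2) * sqrt (LINT x|M. (g x)\<^sup>2)"
    by (simp add: real_le_rsqrt flip: real_sqrt_mult)
  then show "\<bar>LINT x|M. f x * g x\<bar> \<le> sqrt (LINT x|M. (f x)\<^sup>2) * sqrt (LINT x|M. (g x)\<^sup>2)"
    using integral_abs_bound[of M "\<lambda>x. f x * g x"] unfolding real_norm_def by linarith
qed

lemma set_integral_Cauchy_Schwarz:
  fixes f g :: "'a \<Rightarrow> real"
  assumes "set_borel_measurable M A f" "set_borel_measurable M A g"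
    and "set_integrable M A (\<lambda>x. (f x)\<^sup>2)" "set_integrable M A (\<lambda>x. (g x)\<^sup>2)"
  shows "set_integrable M A (\<lambda>x. f x * g x)"
    and "\<bar>LINT x:A|M. f x * g x\<bar> \<le> sqrt (LINT x:A|M. (f x)\<^sup>2) * sqrt (LINT x:A|M. (g x)\<^sup>2)"
proof -
  have sq: "(indicator A x * f x)\<^sup>2 = indicator A x * (f x)\<^sup>2" "(indicator A x * g x)\<^sup>2 = indicator A x * (g x)\<^sup>2"
    and prod: "indicator A x * f x * (indicator A x * g x) = indicator A x * (f x * g x)" for x
    by (simp_all add: indicator_def)
  note CS = Cauchy_Schwarz_integral[of "\<lambda>x. indicator A x * f x" M "\<lambda>x. indicator A x * g x"]
  from assms show "set_integrable M A (\<lambda>x. f x * g x)"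
    and "\<bar>LINT x:A|M. f x * g x\<bar> \<le> sqrt (LINT x:A|M. (f x)\<^sup>2) * sqrt (LINT x:A|M. (g x)\<^sup>2)"
    using CS unfolding set_integrable_def set_lebesgue_integral_def set_borel_measurable_def
    by (simp_all add: sq prod)
qed

lemma set_integral_mono_set_nonneg:
  fixes f :: "'a \<Rightarrow> real"
  assumes "set_integrable M B f" "A \<in> sets M" "A \<subseteq> B" "\<And>x. x \<in> B \<Longrightarrow> 0 \<le> f x"
  shows "(LINT x:A|M. f x) \<le> (LINT x:B|M. f x)"
  using assms set_integrable_subset[OF assms(1-3)]
  unfolding set_lebesgue_integral_def set_integrable_def
  by (intro integral_mono) (auto simp: indicator_def)

lemma set_integrable_const_Icc:
  fixes a b c :: real
  shows "set_integrable lborel {a..b} (\<lambda>_. c)"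
proof -
  have "integrable lborel (indicator {a..b} :: real \<Rightarrow> real)"
    using emeasure_lborel_Icc_eq[of a b] by (simp add: integrable_indicator_iff less_top[symmetric])
  then show ?thesis
    unfolding set_integrable_def by (intro integrable_scaleR_left)
qed

lemma AE_zero_if_set_integral_atMost_zero:
  fixes f :: "real \<Rightarrow> real"
  assumes f: "integrable lborel f" and vanish: "\<And>x. b < x \<Longrightarrow> f x = 0"
    and zero: "\<And>a. (LINT x:{..a}|lborel. f x) = 0"
  shows "AE x in lborel. f x = 0"
proof -
  have [measurable]: "f \<in> borel_measurable borel"
    using f by (simp add: borel_measurable_integrable)
  have "(LINT x:A|lborel. f x) = 0" if "A \<in> sets borel" for A
  proof -
    have "Int_stable (range (atMost :: real \<Rightarrow> _))"
      by (auto simp: Int_stable_def)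
    moreover have "range atMost \<subseteq> Pow UNIV" by simp
    moreover have "A \<in> sigma_sets UNIV (range atMost)"
      using that by (simp add: borel_eq_atMost sets_measure_of)
    ultimately show ?thesis
    proof (induction rule: sigma_sets_induct_disjoint)
      case (basic A)
      then show ?case using zero by auto
    next
      case empty
      show ?case by (simp add: set_lebesgue_integral_def)
    next
      case (compl A)
      then have [measurable]: "A \<in> sets borel"
        by (simp add: borel_eq_atMost sets_measure_of)
      have "(LINT x|lborel. f x) = (LINT x:{..b}|lborel. f x)"
        unfolding set_lebesgue_integral_def
        by (intro Bochner_Integration.integral_cong) (auto simp: indicator_def vanish)
      moreover have "(LINT x:UNIV - A|lborel. f x) = (LINT x|lborel. f x - indicator A x * f x)"
        unfolding set_lebesgue_integral_def
        by (intro Bochner_Integration.integral_cong) (auto simp: indicator_def)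
      moreover have "\<dots> = (LINT x|lborel. f x) - (LINT x:A|lborel. f x)"
        unfolding set_lebesgue_integral_def real_scaleR_def
        using integrable_mult_indicator[OF _ f, of A] by (intro Bochner_Integration.integral_diff f) auto
      ultimately show ?case using compl.IH zero by simp
    next
      case (union A)
      then have [measurable]: "\<And>i. A i \<in> sets borel"
        by (auto simp: borel_eq_atMost sets_measure_of)
      have "(LINT x:(\<Union>i. A i)|lborel. f x) = (\<Sum>i. LINT x:A i|lborel. f x)"
      proof (rule lebesgue_integral_countable_add)
        show "set_integrable lborel (\<Union>i. A i) f"
          unfolding set_integrable_def by (intro integrable_mult_indicator f) measurable
      qed (use union.hyps in \<open>auto simp: disjoint_family_on_def\<close>)
      then show ?case using union.IH by simp
    qed
  qed
  then show ?thesis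
    using density_unique_real[OF f, of "\<lambda>_. 0"] by simp
qed

lemma cadlag_on_eventually_bounded:
  assumes Z: "cadlag_on t Z" and u: "u \<in> {0..t}"
  shows "\<exists>M. \<forall>\<^sub>F v in at u. v \<in> {0..t} \<longrightarrow> \<bar>Z v\<bar> \<le> M"
proof -
  have right: "\<forall>\<^sub>F v in at_right u. v \<in> {0..t} \<longrightarrow> \<bar>Z v\<bar> \<le> \<bar>Z u\<bar> + 1"
  proof (cases "u < t")
    case True
    then have "(Z \<longlongrightarrow> Z u) (at_right u)"
      using Z u by (simp add: cadlag_on_def continuous_within)
    then have "\<forall>\<^sub>F v in at_right u. dist (Z v) (Z u) < 1"
      by (rule tendstoD) simp
    then show ?thesis
      by eventually_elim (auto simp: dist_real_def)
  next
    case False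
    then show ?thesis
      using u by (auto simp: eventually_at_right_field intro: exI[of _ "u + 1"])
  qed
  obtain l where left: "\<forall>\<^sub>F v in at_left u. v \<in> {0..t} \<longrightarrow> \<bar>Z v\<bar> \<le> \<bar>l\<bar> + 1"
  proof (cases "0 < u")
    case True
    then obtain l where "(Z \<longlongrightarrow> l) (at_left u)"
      using Z u unfolding cadlag_on_def by (meson greaterThanAtMost_iff atLeastAtMost_iff)
    then have "\<forall>\<^sub>F v in at_left u. dist (Z v) l < 1"
      by (rule tendstoD) simp
    then have "\<forall>\<^sub>F v in at_left u. v \<in> {0..t} \<longrightarrow> \<bar>Z v\<bar> \<le> \<bar>l\<bar> + 1"
      by eventually_elim (auto simp: dist_real_def)
    then show ?thesis by (rule that)
  next
    case False
    then show ?thesis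
      using u by (intro that[of 0]) (auto simp: eventually_at_left_field intro: exI[of _ "u - 1"])
  qed
  have "\<forall>\<^sub>F v in at u. v \<in> {0..t} \<longrightarrow> \<bar>Z v\<bar> \<le> \<bar>Z u\<bar> + \<bar>l\<bar> + 1"
    unfolding eventually_at_split
    by (intro conjI; rule eventually_mono[OF left] eventually_mono[OF right]) auto
  then show ?thesis by blast
qed

lemma cadlag_on_bounded:
  assumes Z: "cadlag_on t Z"
  obtains B where "\<And>v. v \<in> {0..t} \<Longrightarrow> \<bar>Z v\<bar> \<le> B"
proof -
  have "\<forall>u\<in>{0..t}. \<exists>d M. d > 0 \<and> (\<forall>v\<in>{0..t}. dist v u < d \<longrightarrow> \<bar>Z v\<bar> \<le> M)"
  proof
    fix u assume u: "u \<in> {0..t}"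
    obtain M where "\<forall>\<^sub>F v in at u. v \<in> {0..t} \<longrightarrow> \<bar>Z v\<bar> \<le> M"
      using cadlag_on_eventually_bounded[OF Z u] by blast
    then obtain d where "d > 0" and d: "\<And>v. v \<noteq> u \<Longrightarrow> dist v u < d \<Longrightarrow> v \<in> {0..t} \<longrightarrow> \<bar>Z v\<bar> \<le> M"
      unfolding eventually_at by blast
    moreover have "\<forall>v\<in>{0..t}. dist v u < d \<longrightarrow> \<bar>Z v\<bar> \<le> max M \<bar>Z u\<bar>"
    proof (intro ballI impI)
      fix v assume "v \<in> {0..t}" "dist v u < d"
      then show "\<bar>Z v\<bar> \<le> max M \<bar>Z u\<bar>"
        using d[of v] by (cases "v = u") auto
    qed
    ultimately show "\<exists>d M. d > 0 \<and> (\<forall>v\<in>{0..t}. dist v u < d \<longrightarrow> \<bar>Z v\<bar> \<le> M)"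
      by blast
  qed
  then obtain d M where
    d: "\<And>u. u \<in> {0..t} \<Longrightarrow> d u > 0" and
    M: "\<And>u v. u \<in> {0..t} \<Longrightarrow> v \<in> {0..t} \<Longrightarrow> dist v u < d u \<Longrightarrow> \<bar>Z v\<bar> \<le> M u"
    by metis
  obtain T where T: "T \<subseteq> {0..t}" "finite T" "{0..t} \<subseteq> (\<Union>u\<in>T. ball u (d u))"
    using compactE_image[OF compact_Icc, where C="{0..t}" and f="\<lambda>u. ball u (d u)"] d by force
  show ?thesis
  proof (rule that[of "Max (M ` T)"])
    fix v assume v: "v \<in> {0..t}"
    then obtain u where u: "u \<in> T" "dist v u < d u"
      using T by (auto simp: dist_commute)
    then have "\<bar>Z v\<bar> \<le> M u" using M T v by blast
    also have "M u \<le> Max (M ` T)" using u T by simp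
    finally show "\<bar>Z v\<bar> \<le> Max (M ` T)" .
  qed
qed

lemma tendsto_left_lim:
  assumes Z: "cadlag_on t Z" and u: "u \<in> {0<..t}"
  shows "(Z \<longlongrightarrow> left_lim Z u) (at_left u)"
proof -
  obtain l where "(Z \<longlongrightarrow> l) (at_left u)" using Z u unfolding cadlag_on_def by blast
  then show ?thesis
    unfolding left_lim_def by (simp add: tendsto_Lim trivial_limit_at_left_real)
qed

lemma abs_left_lim_le:
  assumes Z: "cadlag_on t Z" and u: "u \<in> {0<..t}" and B: "\<And>v. v \<in> {0..t} \<Longrightarrow> \<bar>Z v\<bar> \<le> B"
  shows "\<bar>left_lim Z u\<bar> \<le> B"
proof (rule tendsto_upperbound)
  show "((\<lambda>v. \<bar>Z v\<bar>) \<longlongrightarrow> \<bar>left_lim Z u\<bar>) (at_left u)"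
    by (intro tendsto_rabs tendsto_left_lim[OF Z u])
  show "\<forall>\<^sub>F v in at_left u. \<bar>Z v\<bar> \<le> B"
    unfolding eventually_at_left_field using u B by (intro exI[of _ 0]) auto
qed (simp add: trivial_limit_at_left_real)

lemma borel_measurable_left_lim_Ioc:
  assumes Z: "cadlag_on t Z"
  shows "(\<lambda>u. indicator {0<..t} u * left_lim Z u) \<in> borel_measurable borel"
proof (rule borel_measurable_LIMSEQ_real)
  define p where "p n u = (real_of_int \<lceil>u * 2^n\<rceil> - 1) / 2^n" for n :: nat and u :: real
  show "(\<lambda>n. indicator {0<..t} u * Z (p n u)) \<longlonglongrightarrow> indicator {0<..t} u * left_lim Z u" for u
  proof (cases "u \<in> {0<..t}")
    case True
    have p_less: "p n u < u" and p_ge: "u - 1 / 2^n \<le> p n u" for n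
      unfolding p_def by (simp_all add: field_simps) linarith+
    have "(\<lambda>n. p n u) \<longlonglongrightarrow> u"
    proof (rule real_tendsto_sandwich)
      show "\<forall>\<^sub>F n in sequentially. u - 1 / 2^n \<le> p n u"
        using p_ge by simp
      show "\<forall>\<^sub>F n in sequentially. p n u \<le> u"
        using p_less by (simp add: less_imp_le)
      show "(\<lambda>n. u - 1 / 2^n) \<longlonglongrightarrow> u"
        using tendsto_diff[OF tendsto_const[of u] LIMSEQ_divide_realpow_zero[of 2 1]] by simp
    qed simp
    then have "filterlim (\<lambda>n. p n u) (at_left u) sequentially"
      unfolding filterlim_at using p_less by (auto simp: less_imp_neq)
    with tendsto_left_lim[OF Z True] have "(\<lambda>n. Z (p n u)) \<longlonglongrightarrow> left_lim Z u"
      by (rule filterlim_compose)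
    then show ?thesis using True by simp
  qed simp
  \<comment> \<open>Each approximant is measurable although Z need not be: it depends on u only through
    the integer \<lceil>u * 2^n\<rceil>.\<close>
  show "(\<lambda>u. indicator {0<..t} u * Z (p n u)) \<in> borel_measurable borel" for n
  proof -
    have "(\<lambda>u. \<lceil>u * (2::real) ^ n\<rceil>) \<in> borel \<rightarrow>\<^sub>M count_space UNIV"
      by measurable
    then have "(\<lambda>u. Z ((real_of_int \<lceil>u * (2::real)^n\<rceil> - 1) / 2^n)) \<in> borel_measurable borel"
      by (rule measurable_compose_countable[where f="\<lambda>i u. Z ((real_of_int i - 1) / 2^n)", rotated]) simp
    then show ?thesis unfolding p_def by simp
  qed
qed

lemma set_borel_measurable_left_lim:
  assumes Z: "cadlag_on t Z" and "s \<le> t"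
  shows "set_borel_measurable lborel {0..s} (left_lim Z)"
proof -
  have "(\<lambda>u. indicator {0..s} u * left_lim Z u)
      = (\<lambda>u. indicator {0..s} u * (indicator {0<..t} u * left_lim Z u + indicator {0} u * left_lim Z 0))"
    using \<open>s \<le> t\<close> by (auto simp: indicator_def)
  then show ?thesis
    using borel_measurable_left_lim_Ioc[OF Z] by (simp add: set_borel_measurable_def)
qed

lemma set_integrable_left_lim_square:
  assumes Z: "cadlag_on t Z" and "s \<le> t"
  shows "set_integrable lborel {0..s} (\<lambda>u. (left_lim Z u)\<^sup>2)"
proof -
  obtain B where B: "\<And>v. v \<in> {0..t} \<Longrightarrow> \<bar>Z v\<bar> \<le> B"
    using cadlag_on_bounded[OF Z] by blast
  \<comment> \<open>left_lim Z 0 is a junk value (it depends on Z left of 0) and is bounded separately.\<close>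
  define B' where "B' = max B \<bar>left_lim Z 0\<bar>"
  have "\<bar>left_lim Z u\<bar> \<le> B'" if "u \<in> {0..s}" for u
    using that abs_left_lim_le[OF Z _ B, of u] \<open>s \<le> t\<close>
    by (cases "u = 0") (auto simp: B'_def le_max_iff_disj)
  then have "(left_lim Z u)\<^sup>2 \<le> B'\<^sup>2" if "u \<in> {0..s}" for u
    using that by (metis power2_abs power_mono abs_ge_zero)
  moreover have "set_borel_measurable lborel {0..s} (\<lambda>u. (left_lim Z u)\<^sup>2)"
  proof -
    have "(\<lambda>u. indicator {0..s} u * (left_lim Z u)\<^sup>2) = (\<lambda>u. (indicator {0..s} u * left_lim Z u)\<^sup>2)"
      by (auto simp: indicator_def)
    then show ?thesis
      using set_borel_measurable_left_lim[OF assms] by (simp add: set_borel_measurable_def)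
  qed
  ultimately show ?thesis
    by (intro set_integrable_bound[OF set_integrable_const_Icc[of 0 s "B'\<^sup>2"]]) auto
qed

lemma is_wderiv_set_borel_measurable:
  assumes "is_wderiv t h g" and "A \<in> sets borel"
  shows "set_borel_measurable lborel A g"
proof -
  have [measurable]: "g \<in> borel_measurable borel" "A \<in> sets borel"
    using assms by (simp_all add: is_wderiv_def)
  show ?thesis
    unfolding set_borel_measurable_def by measurable
qed

lemma is_wderiv_set_integrable_square:
  assumes "is_wderiv t h g" and "x \<le> t"
  shows "set_integrable lborel {0..x} (\<lambda>u. (g u)\<^sup>2)"
  using assms set_integrable_subset[of lborel "{0..t}" "\<lambda>u. (g u)\<^sup>2" "{0..x}"]
  unfolding is_wderiv_def by auto

lemma is_wderiv_set_integrable: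
  assumes g: "is_wderiv t h g" and "x \<le> t"
  shows "set_integrable lborel {0..x} g"
  using set_integral_Cauchy_Schwarz(1)[of lborel "{0..x}" "\<lambda>_. 1" g]
    is_wderiv_set_borel_measurable[OF g] is_wderiv_set_integrable_square[OF assms]
    set_integrable_const_Icc
  by (simp add: set_borel_measurable_def)

lemma is_wderiv_unique:
  assumes g1: "is_wderiv t h g1" and g2: "is_wderiv t h g2"
  shows "AE u in lborel. u \<in> {0..t} \<longrightarrow> g1 u = g2 u"
proof -
  define F where "F u = indicator {0..t} u * (g1 u - g2 u)" for u
  have "integrable lborel F"
    using set_integral_diff(1)[OF is_wderiv_set_integrable[OF g1] is_wderiv_set_integrable[OF g2]]
    unfolding F_def set_integrable_def by simp
  moreover have "(LINT u:{..a}|lborel. F u) = 0" for a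
  proof -
    define m where "m = min a t"
    have "(LINT u:{..a}|lborel. F u) = (LINT u:{0..m}|lborel. g1 u - g2 u)"
      unfolding set_lebesgue_integral_def F_def m_def
      by (intro Bochner_Integration.integral_cong) (auto simp: indicator_def)
    also have "\<dots> = 0"
    proof (cases "0 \<le> m")
      case True
      then have "m \<in> {0..t}" by (simp add: m_def)
      then have "h m = h 0 + (LINT u:{0..m}|lborel. g1 u)" "h m = h 0 + (LINT u:{0..m}|lborel. g2 u)"
        using g1 g2 unfolding is_wderiv_def by blast+
      moreover have "m \<le> t" by (simp add: m_def)
      note set_integral_diff(2)[OF is_wderiv_set_integrable[OF g1 this] is_wderiv_set_integrable[OF g2 this]]
      ultimately show ?thesis by simp
    qed (simp add: set_lebesgue_integral_def)
    finally show ?thesis .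
  qed
  moreover have "F u = 0" if "t < u" for u
    using that by (simp add: F_def)
  ultimately have "AE u in lborel. F u = 0"
    using AE_zero_if_set_integral_atMost_zero[of F t] by blast
  then show ?thesis
    by eventually_elim (auto simp: F_def)
qed

lemma is_wderiv_diff:
  assumes gk: "is_wderiv t k gk" and gh: "is_wderiv t h gh"
  shows "is_wderiv t (\<lambda>u. k u - h u) (\<lambda>u. gk u - gh u)"
proof -
  have k2: "set_integrable lborel {0..t} (\<lambda>u. (gk u)\<^sup>2)"
    and h2: "set_integrable lborel {0..t} (\<lambda>u. (gh u)\<^sup>2)"
    using gk gh by (simp_all add: is_wderiv_def)
  have "set_integrable lborel {0..t} (\<lambda>u. gk u * gh u)"
    by (rule set_integral_Cauchy_Schwarz(1)[OF is_wderiv_set_borel_measurable[OF gk]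
        is_wderiv_set_borel_measurable[OF gh] k2 h2]) simp_all
  then have "set_integrable lborel {0..t} (\<lambda>u. 2 * (gk u * gh u))"
    by (rule set_integrable_mult_right)
  then have "set_integrable lborel {0..t} (\<lambda>u. (gk u)\<^sup>2 + (gh u)\<^sup>2 - 2 * (gk u * gh u))"
    by (rule set_integral_diff(1)[OF set_integral_add(1)[OF k2 h2]])
  moreover have "(\<lambda>u. (gk u - gh u)\<^sup>2) = (\<lambda>u. (gk u)\<^sup>2 + (gh u)\<^sup>2 - 2 * (gk u * gh u))"
    by (simp add: fun_eq_iff power2_diff)
  ultimately have "set_integrable lborel {0..t} (\<lambda>u. (gk u - gh u)\<^sup>2)"
    by simp
  moreover have "k x - h x = (k 0 - h 0) + (LINT u:{0..x}|lborel. gk u - gh u)" if "x \<in> {0..t}" for x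
  proof -
    have "k x = k 0 + (LINT u:{0..x}|lborel. gk u)" "h x = h 0 + (LINT u:{0..x}|lborel. gh u)"
      using that gk gh unfolding is_wderiv_def by blast+
    moreover have "x \<le> t" using that by simp
    note set_integral_diff(2)[OF is_wderiv_set_integrable[OF gk this] is_wderiv_set_integrable[OF gh this]]
    ultimately show ?thesis by simp
  qed
  moreover have "(\<lambda>u. gk u - gh u) \<in> borel_measurable lborel"
    using gk gh unfolding is_wderiv_def by (intro borel_measurable_diff) blast+
  ultimately show ?thesis
    unfolding is_wderiv_def by blast
qed

lemma is_wderiv_wderiv:
  assumes "h \<in> W12 t"
  shows "is_wderiv t h (wderiv t h)"
proof -
  obtain g where "is_wderiv t h g"
    using assms unfolding W12_def by blast
  then show ?thesis
    unfolding wderiv_def by (rule someI[where P = "is_wderiv t h"])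
qed

lemma W12_diff:
  assumes "k \<in> W12 t" "h \<in> W12 t"
  shows "(\<lambda>u. k u - h u) \<in> W12 t"
  using is_wderiv_diff[OF is_wderiv_wderiv[OF assms(1)] is_wderiv_wderiv[OF assms(2)]]
  unfolding W12_def by blast

lemma zero_in_W12: "(\<lambda>_. 0) \<in> W12 t"
  and w12_norm_zero: "w12_norm t (\<lambda>_. 0) = 0"
proof -
  have zero: "is_wderiv t (\<lambda>_. 0) (\<lambda>_. 0)"
    by (simp add: is_wderiv_def set_integrable_def)
  then show "(\<lambda>_. 0) \<in> W12 t"
    unfolding W12_def by blast
  then have "AE u in lborel. u \<in> {0..t} \<longrightarrow> wderiv t (\<lambda>_. 0) u = 0"
    using is_wderiv_unique[OF is_wderiv_wderiv zero] by simp
  then have "AE u in lborel. u \<in> {0..t} \<longrightarrow> (wderiv t (\<lambda>_. 0) u)\<^sup>2 = 0"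
    by eventually_elim simp
  moreover have "wderiv t (\<lambda>_. 0) \<in> borel_measurable borel"
    using is_wderiv_wderiv[OF \<open>(\<lambda>_. 0) \<in> W12 t\<close>] by (simp add: is_wderiv_def)
  ultimately have "(LINT u:{0..t}|lborel. (wderiv t (\<lambda>_. 0) u)\<^sup>2) = (LINT u:{0..t}|lborel. 0)"
    by (intro set_lebesgue_integral_cong_AE) auto
  then show "w12_norm t (\<lambda>_. 0) = 0"
    by (simp add: w12_norm_def set_lebesgue_integral_def)
qed

lemma sqrt_set_integral_wderiv_square_le_w12_norm:
  assumes h: "h \<in> W12 t" and "s \<le> t"
  shows "sqrt (LINT u:{0..s}|lborel. (wderiv t h u)\<^sup>2) \<le> w12_norm t h"
proof -
  have "(LINT u:{0..s}|lborel. (wderiv t h u)\<^sup>2) \<le> (LINT u:{0..t}|lborel. (wderiv t h u)\<^sup>2)"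
    using is_wderiv_wderiv[OF h] \<open>s \<le> t\<close>
    by (intro set_integral_mono_set_nonneg) (auto simp: is_wderiv_def)
  also have "\<dots> \<le> (h 0)\<^sup>2 + (LINT u:{0..t}|lborel. (wderiv t h u)\<^sup>2)"
    by simp
  finally show ?thesis
    unfolding w12_norm_def by simp
qed

text \<open>Point evaluation at s has norm at most sqrt (R(s,s)) = sqrt (1 + s): apply Cauchy-Schwarz
  in the plane to h(s) = h(0) * 1 + (the integral of h' over [0,s]).\<close>

lemma abs_eval_le_w12_norm:
  assumes h: "h \<in> W12 t" and s: "s \<in> {0..t}"
  shows "\<bar>h s\<bar> \<le> sqrt (1 + s) * w12_norm t h"
proof -
  define g where "g = wderiv t h"
  define G where "G = (LINT u:{0..t}|lborel. (g u)\<^sup>2)"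
  have g: "is_wderiv t h g"
    unfolding g_def by (rule is_wderiv_wderiv[OF h])
  have G: "0 \<le> G"
    unfolding G_def set_lebesgue_integral_def by simp
  have "(LINT u:{0..s}|lborel. (1::real)\<^sup>2) = s"
    using s by (simp add: set_lebesgue_integral_def)
  moreover have "\<bar>LINT u:{0..s}|lborel. 1 * g u\<bar>
      \<le> sqrt (LINT u:{0..s}|lborel. (1::real)\<^sup>2) * sqrt (LINT u:{0..s}|lborel. (g u)\<^sup>2)"
    by (rule set_integral_Cauchy_Schwarz(2))
      (use set_integrable_const_Icc is_wderiv_set_borel_measurable[OF g]
        is_wderiv_set_integrable_square[OF g] s in \<open>simp_all add: set_borel_measurable_def\<close>)
  moreover have "(LINT u:{0..s}|lborel. (g u)\<^sup>2) \<le> G"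
    unfolding G_def using g s
    by (intro set_integral_mono_set_nonneg) (auto simp: is_wderiv_def)
  then have "sqrt s * sqrt (LINT u:{0..s}|lborel. (g u)\<^sup>2) \<le> sqrt s * sqrt G"
    using s by (intro mult_left_mono) simp_all
  ultimately have "\<bar>LINT u:{0..s}|lborel. g u\<bar> \<le> sqrt G * sqrt s"
    by (simp add: mult.commute)
  moreover have "h s = h 0 + (LINT u:{0..s}|lborel. g u)"
    using g s unfolding is_wderiv_def by blast
  ultimately have "\<bar>h s\<bar> \<le> \<bar>h 0\<bar> * 1 + sqrt G * sqrt s"
    by linarith
  also have "\<dots> = inner (\<bar>h 0\<bar>, sqrt G) (1, sqrt s)"
    by simp
  also have "\<dots> \<le> norm (\<bar>h 0\<bar>, sqrt G) * norm (1 :: real, sqrt s)"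
    by (rule norm_cauchy_schwarz)
  also have "\<dots> = w12_norm t h * sqrt (1 + s)"
    using G s by (simp add: norm_Pair w12_norm_def G_def g_def)
  finally show ?thesis
    by (simp add: mult.commute)
qed

lemma set_integrable_left_lim_mult:
  assumes Z: "cadlag_on t Z" and "s \<le> t" and g: "is_wderiv t h g"
  shows "set_integrable lborel {0..s} (\<lambda>u. left_lim Z u * g u)"
    and "\<bar>LINT u:{0..s}|lborel. left_lim Z u * g u\<bar>
      \<le> sqrt (LINT u:{0..s}|lborel. (left_lim Z u)\<^sup>2) * sqrt (LINT u:{0..s}|lborel. (g u)\<^sup>2)"
  using set_integral_Cauchy_Schwarz[OF set_borel_measurable_left_lim[OF Z \<open>s \<le> t\<close>]
      is_wderiv_set_borel_measurable[OF g] set_integrable_left_lim_square[OF Z \<open>s \<le> t\<close>]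
      is_wderiv_set_integrable_square[OF g \<open>s \<le> t\<close>]]
  by simp_all

lemma abs_Xint_le:
  assumes Z: "cadlag_on t Z" and s: "0 \<le> s" "s \<le> t" and h: "h \<in> W12 t"
  shows "\<bar>Xint t Z s h\<bar>
    \<le> (\<bar>Z s\<bar> * (1 + s) + \<bar>Z 0\<bar> + sqrt (LINT u:{0..s}|lborel. (left_lim Z u)\<^sup>2)) * w12_norm t h"
proof -
  define N where "N = w12_norm t h"
  define R where "R = (LINT u:{0..s}|lborel. (left_lim Z u)\<^sup>2)"
  have R: "0 \<le> R"
    unfolding R_def set_lebesgue_integral_def by simp
  have h0: "\<bar>h 0\<bar> \<le> N"
    using abs_eval_le_w12_norm[OF h, of 0] s by (simp add: N_def)
  have "sqrt (1 + s) \<le> 1 + s"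
    using s by (intro real_le_lsqrt) (simp_all add: power2_eq_square)
  then have "sqrt (1 + s) * N \<le> (1 + s) * N"
    using h0 by (intro mult_right_mono) simp_all
  with abs_eval_le_w12_norm[OF h] s have hs: "\<bar>h s\<bar> \<le> (1 + s) * N"
    by (fastforce simp: N_def)
  have "\<bar>LINT u:{0..s}|lborel. left_lim Z u * wderiv t h u\<bar>
      \<le> sqrt R * sqrt (LINT u:{0..s}|lborel. (wderiv t h u)\<^sup>2)"
    unfolding R_def by (rule set_integrable_left_lim_mult(2)[OF Z s(2) is_wderiv_wderiv[OF h]])
  also have "\<dots> \<le> sqrt R * N"
    using sqrt_set_integral_wderiv_square_le_w12_norm[OF h s(2)] R
    by (intro mult_left_mono) (simp_all add: N_def)
  finally have int: "\<bar>LINT u:{0..s}|lborel. left_lim Z u * wderiv t h u\<bar> \<le> sqrt R * N" .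
  have "\<bar>Xint t Z s h\<bar> \<le> \<bar>h s\<bar> * \<bar>Z s\<bar> + \<bar>h 0\<bar> * \<bar>Z 0\<bar>
      + \<bar>LINT u:{0..s}|lborel. left_lim Z u * wderiv t h u\<bar>"
    unfolding Xint_def by (simp add: abs_mult[symmetric])
  also have "\<dots> \<le> (1 + s) * N * \<bar>Z s\<bar> + N * \<bar>Z 0\<bar> + sqrt R * N"
    using hs h0 int by (intro add_mono mult_right_mono) simp_all
  finally show ?thesis
    by (simp add: N_def R_def algebra_simps)
qed

lemma Xint_diff:
  assumes Z: "cadlag_on t Z" and "s \<le> t" and k: "k \<in> W12 t" and h: "h \<in> W12 t"
  shows "Xint t Z s (\<lambda>u. k u - h u) = Xint t Z s k - Xint t Z s h"
proof -
  define gk gh gd where "gk = wderiv t k" and "gh = wderiv t h" and "gd = wderiv t (\<lambda>u. k u - h u)"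
  have gk: "is_wderiv t k gk" and gh: "is_wderiv t h gh" and gd: "is_wderiv t (\<lambda>u. k u - h u) gd"
    unfolding gk_def gh_def gd_def using k h W12_diff[OF k h] by (simp_all add: is_wderiv_wderiv)
  \<comment> \<open>wderiv is a choice, so it is additive only almost everywhere.\<close>
  have ae: "AE u in lborel. u \<in> {0..t} \<longrightarrow> gd u = gk u - gh u"
    by (rule is_wderiv_unique[OF gd is_wderiv_diff[OF gk gh]])
  note ik = set_integrable_left_lim_mult(1)[OF Z \<open>s \<le> t\<close> gk]
  note ih = set_integrable_left_lim_mult(1)[OF Z \<open>s \<le> t\<close> gh]
  note id = set_integrable_left_lim_mult(1)[OF Z \<open>s \<le> t\<close> gd]
  have "(LINT u:{0..s}|lborel. left_lim Z u * gd u) = (LINT u:{0..s}|lborel. left_lim Z u * (gk u - gh u))"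
    unfolding set_lebesgue_integral_def
  proof (rule integral_cong_AE)
    show "AE u in lborel. indicator {0..s} u *\<^sub>R (left_lim Z u * gd u)
        = indicator {0..s} u *\<^sub>R (left_lim Z u * (gk u - gh u))"
      using ae by eventually_elim (use \<open>s \<le> t\<close> in \<open>auto simp: indicator_def\<close>)
  qed (use id set_integral_diff(1)[OF ik ih] in \<open>auto simp: set_integrable_def right_diff_distrib\<close>)
  also have "\<dots> = (LINT u:{0..s}|lborel. left_lim Z u * gk u) - (LINT u:{0..s}|lborel. left_lim Z u * gh u)"
    using set_integral_diff(2)[OF ik ih] by (simp add: right_diff_distrib)
  finally show ?thesis
    unfolding Xint_def gk_def gh_def gd_def by (simp add: algebra_simps)
qed

lemma Xint_continuous:
  assumes Z: "cadlag_on t Z" and s: "0 \<le> s" "s \<le> t" and h: "h \<in> W12 t" and "e > 0"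
  shows "\<exists>d>0. \<forall>k\<in>W12 t. w12_norm t (\<lambda>u. k u - h u) < d \<longrightarrow> \<bar>Xint t Z s k - Xint t Z s h\<bar> < e"
proof -
  define C where "C = \<bar>Z s\<bar> * (1 + s) + \<bar>Z 0\<bar> + sqrt (LINT u:{0..s}|lborel. (left_lim Z u)\<^sup>2)"
  have C: "0 \<le> C"
    using s unfolding C_def set_lebesgue_integral_def by simp
  show ?thesis
  proof (intro exI[of _ "e / (C + 1)"] conjI ballI impI)
    show "0 < e / (C + 1)"
      using \<open>e > 0\<close> C by simp
    fix k assume k: "k \<in> W12 t" and close: "w12_norm t (\<lambda>u. k u - h u) < e / (C + 1)"
    have "\<bar>Xint t Z s k - Xint t Z s h\<bar> = \<bar>Xint t Z s (\<lambda>u. k u - h u)\<bar>"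
      using Xint_diff[OF Z s(2) k h] by simp
    also have "\<dots> \<le> C * w12_norm t (\<lambda>u. k u - h u)"
      unfolding C_def by (rule abs_Xint_le[OF Z s W12_diff[OF k h]])
    also have "\<dots> \<le> C * (e / (C + 1))"
      using C close by (intro mult_left_mono) simp_all
    also have "\<dots> < e"
      using C \<open>e > 0\<close> by (simp add: field_simps)
    finally show "\<bar>Xint t Z s k - Xint t Z s h\<bar> < e" .
  qed
qed

lemma dual_norm_Xint_le:
  assumes Z: "cadlag_on t Z" and s: "0 \<le> s" "s \<le> t"
  shows "dual_norm t (Xint t Z s)
    \<le> \<bar>Z s\<bar> * (1 + s) + \<bar>Z 0\<bar> + sqrt (LINT u:{0..s}|lborel. (left_lim Z u)\<^sup>2)"
proof -
  define C where "C = \<bar>Z s\<bar> * (1 + s) + \<bar>Z 0\<bar> + sqrt (LINT u:{0..s}|lborel. (left_lim Z u)\<^sup>2)"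
  have C: "0 \<le> C"
    using s unfolding C_def set_lebesgue_integral_def by simp
  have "Sup {\<bar>Xint t Z s h\<bar> |h. h \<in> W12 t \<and> w12_norm t h \<le> 1} \<le> C"
  proof (rule cSup_least)
    have "\<bar>Xint t Z s (\<lambda>_. 0)\<bar> \<in> {\<bar>Xint t Z s h\<bar> |h. h \<in> W12 t \<and> w12_norm t h \<le> 1}"
      using zero_in_W12 w12_norm_zero by auto
    then show "{\<bar>Xint t Z s h\<bar> |h. h \<in> W12 t \<and> w12_norm t h \<le> 1} \<noteq> {}"
      by blast
  next
    fix x assume "x \<in> {\<bar>Xint t Z s h\<bar> |h. h \<in> W12 t \<and> w12_norm t h \<le> 1}"
    then obtain h where h: "h \<in> W12 t" "w12_norm t h \<le> 1" and x: "x = \<bar>Xint t Z s h\<bar>"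
      by blast
    have "x \<le> C * w12_norm t h"
      unfolding x C_def by (rule abs_Xint_le[OF Z s h(1)])
    also have "\<dots> \<le> C * 1"
      by (rule mult_left_mono[OF h(2) C])
    finally show "x \<le> C" by simp
  qed
  then show ?thesis
    unfolding dual_norm_def C_def .
qed

theorem lemmaA1:
  fixes Z :: "real \<Rightarrow> real" and s t :: real
  assumes "t > 0" and "0 \<le> s" and "s \<le> t" and "cadlag_on t Z"
  shows "(\<forall>h\<in>W12 t. \<forall>e>0. \<exists>d>0. \<forall>k\<in>W12 t.
            w12_norm t (\<lambda>u. k u - h u) < d \<longrightarrow> \<bar>Xint t Z s k - Xint t Z s h\<bar> < e)
    \<and> set_integrable lborel {0..s} (\<lambda>u. (left_lim Z u)\<^sup>2)
    \<and> dual_norm t (Xint t Z s) \<le>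
        \<bar>Z s\<bar> * (1 + s) + \<bar>Z 0\<bar> + sqrt (LINT u:{0..s}|lborel. (left_lim Z u)\<^sup>2)"
  using Xint_continuous[OF assms(4,2,3)] set_integrable_left_lim_square[OF assms(4,3)]
    dual_norm_Xint_le[OF assms(4,2,3)]
  by blast

end
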